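(* Assume the standing assumptions (A1)–(A4). If $\rho> L_0/\beta$, then for all $p\in\mathbb R^{n_p}$ $$\psi(p)\le \frac{L_\psi}{2}\Bigl[d(p)+\frac{\kappa_0}{\sqrt\rho}\Bigr]^2,\qquad \kappa_0:=\frac{2L_0}{\beta}\sqrt{\frac{2}{\mu_0}\psi(p_u)} .$$ In particular $\psi(p^* )\le \dfrac{L_\psi\kappa_0^2}{2\rho}$.
   Context: Let $n_p,n_c\ge 1$, let $f_0:\mathbb R^{n_p}\to\mathbb R$ and $c_i:\mathbb R^{n_p}\to\mathbb R$ ($i=1,\dots,n_c$) be continuously differentiable, and let $\{1,\dots,n_c\}=I_s\cup I_h$ be a partition into disjoint sets of soft and hard constraint indices. The original problem is $\min_{p\in\mathbb R^{n_p}} f_0(p)$ subject to $c_i(p)\le 0$ for all $i$; $f^{opt}$ denotes its optimal value and $p^{opt}$ an optimal solution (assumed to exist). For a fixed $\varepsilon_\psi>0$ let $\psi(p):=\sum_{i\in I_s}[\max\{0,c_i(p)\}]^2+\sum_{i\in I_h}[\max\{0,c_i(p)+\varepsilon_\psi\}]^2$, and for a penalty parameter $\rho>0$ let $f(p):=f_0(p)+\rho\,\psi(p)$. A differentiable function $\ell$ belongs to $\mathcal F^1_L$ if $\ell(p_2)\le \ell(p_1)+\langle \ell'(p_1),p_2-p_1\rangle+\frac L2\|p_2-p_1\|^2$ for all $p_1,p_2$, and is $\mu$-strongly convex if $\ell(p_2)\ge \ell(p_1)+\langle \ell'(p_1),p_2-p_1\rangle+\frac \mu2\|p_2-p_1\|^2$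 for all $p_1,p_2$. Standing assumptions: (A1) $f_0(p)\ge 0$ for all $p$; (A2) $f_0\in\mathcal F^1_{L_0}$ and $\psi\in\mathcal F^1_{L_\psi}$ for some reals $L_0,L_\psi\ge 0$; (A3) $f_0$ is $\mu_0$-strongly convex for some $\mu_0>0$, and $\psi$ is convex; (A4) the set $\mathcal A:=\{p:\psi(p)=0\}$ is nonempty and there is $\beta>0$ with $\psi(p)\ge \beta\,[d(p,\mathcal A)]^2$ for all $p$, where $d(p,\mathcal A):=\min_{z\in\mathcal A}\|z-p\|$. Notation: $\|\cdot\|$ is the Euclidean norm; $p^*$ is the unique minimizer of $f$ over $\mathbb R^{n_p}$; $p_u$ is the unique unconstrained minimizer of $f_0$; $p_a$ is a fixed point with $\psi(p_a)=0$; $D_0:=\sup\{\|f_0'(p)\|:\ f_0(p)\le f_0(p_a)\}$; $d(p):=\|p-p^*\|$. *)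

theory Defs
  imports "HOL-Analysis.Analysis"
begin

definition F1L :: "('a::real_inner \<Rightarrow> real) \<Rightarrow> real \<Rightarrow> bool" where
  "F1L l L \<longleftrightarrow> (\<exists>grad. (\<forall>p. (l has_derivative (\<lambda>h. grad p \<bullet> h)) (at p)) \<and>
      (\<forall>p1 p2. l p2 \<le> l p1 + grad p1 \<bullet> (p2 - p1) + L / 2 * (norm (p2 - p1))\<^sup>2))"

definition strongly_convex :: "('a::real_inner \<Rightarrow> real) \<Rightarrow> real \<Rightarrow> bool" where
  "strongly_convex l \<mu> \<longleftrightarrow> (\<exists>grad. (\<forall>p. (l has_derivative (\<lambda>h. grad p \<bullet> h)) (at p)) \<and>
      (\<forall>p1 p2. l p2 \<ge> l p1 + grad p1 \<bullet> (p2 - p1) + \<mu> / 2 * (norm (p2 - p1))\<^sup>2))"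

definition C1 :: "('a::real_normed_vector \<Rightarrow> real) \<Rightarrow> bool" where
  "C1 g \<longleftrightarrow> (\<exists>D. (\<forall>p. (g has_derivative blinfun_apply (D p)) (at p)) \<and> continuous_on UNIV D)"

definition penalty :: "nat set \<Rightarrow> nat set \<Rightarrow> (nat \<Rightarrow> 'a \<Rightarrow> real) \<Rightarrow> real \<Rightarrow> 'a \<Rightarrow> real" where
  "penalty Is Ih c eps p = (\<Sum>i\<in>Is. (max 0 (c i p))\<^sup>2) + (\<Sum>i\<in>Ih. (max 0 (c i p + eps))\<^sup>2)"

end

theory Submission
  imports Defs
begin

text \<open>
  Let \<open>z\<close> be a point of the zero set \<open>\<A>\<close> of \<open>\<psi>\<close> nearest to \<open>p\<^sup>*\<close>, and
  \<open>d = \<parallel>z - p\<^sup>*\<parallel>\<close>. As \<open>\<psi> \<ge> 0\<close> attains its minimum at \<open>z\<close>, its gradient vanishes there,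
  so smoothness gives \<open>\<psi> p \<le> L\<^sub>\<psi>/2 \<parallel>p - z\<parallel>\<^sup>2 \<le> L\<^sub>\<psi>/2 (\<parallel>p - p\<^sup>*\<parallel> + d)\<^sup>2\<close>, and it remains
  to show \<open>d \<le> \<kappa>\<^sub>0/\<surd>\<rho>\<close>. Comparing \<open>p\<^sup>*\<close> with \<open>z\<close> in the penalised objective, the error
  bound (A4) and the smoothness of \<open>f\<^sub>0\<close> at \<open>p\<^sup>*\<close> give
  \<open>\<rho>\<beta>d\<^sup>2 \<le> \<parallel>\<nabla>f\<^sub>0(p\<^sup>*)\<parallel> d + L\<^sub>0/2 d\<^sup>2\<close>, hence \<open>d \<le> 2\<parallel>\<nabla>f\<^sub>0(p\<^sup>*)\<parallel>/(\<rho>\<beta>)\<close> once \<open>\<rho>\<beta> > L\<^sub>0\<close>.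
  Finally \<open>\<parallel>\<nabla>f\<^sub>0(p\<^sup>*)\<parallel>\<^sup>2 \<le> 2L\<^sub>0(f\<^sub>0(p\<^sup>*) - f\<^sub>0(p\<^sub>u)) \<le> 2L\<^sub>0\<rho>\<psi>(p\<^sub>u)\<close>, and \<open>\<mu>\<^sub>0 \<le> L\<^sub>0\<close> turns
  this into the constant \<open>\<kappa>\<^sub>0\<close>.
\<close>

lemma F1L_continuous:
  assumes "F1L l L"
  shows "continuous_on UNIV l"
proof -
  obtain grad where "\<forall>p. (l has_derivative (\<lambda>h. grad p \<bullet> h)) (at p)"
    using assms unfolding F1L_def by blast
  then show ?thesis
    by (intro has_derivative_continuous_on) (auto intro: has_derivative_at_withinI)
qed

lemma upper_quadratic_grad_eq_0_at_min:
  fixes g z :: "'a::real_inner"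
  assumes upper: "\<And>p. l p \<le> l z + g \<bullet> (p - z) + L / 2 * (norm (p - z))\<^sup>2"
    and min: "\<And>p. l z \<le> l p" and "L \<ge> 0"
  shows "g = 0"
proof -
  define t where "t = 1 / (L + 1)"
  have t: "t > 0" "L * t < 2" using \<open>L \<ge> 0\<close> by (auto simp: t_def field_simps)
  have "l z \<le> l (z - t *\<^sub>R g)" by (rule min)
  also have "\<dots> \<le> l z - t * (norm g)\<^sup>2 + L / 2 * t\<^sup>2 * (norm g)\<^sup>2"
    using upper[of "z - t *\<^sub>R g"] t
    by (simp add: power2_norm_eq_inner inner_diff_right power_mult_distrib)
  finally have "t * (norm g)\<^sup>2 \<le> t * (norm g)\<^sup>2 * (L * t / 2)"
    by (simp add: power2_eq_square algebra_simps)
  moreover have "L * t / 2 < 1" using t by simp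
  ultimately have "\<not> t * (norm g)\<^sup>2 > 0"
    by (metis mult.right_neutral mult_strict_left_mono not_less)
  with t show ?thesis by (simp add: zero_less_mult_iff)
qed

lemma F1L_le_min_plus_quadratic:
  fixes l :: "'a::real_inner \<Rightarrow> real"
  assumes "F1L l L" "L \<ge> 0" and min: "\<And>p. l z \<le> l p"
  shows "l p \<le> l z + L / 2 * (norm (p - z))\<^sup>2"
proof -
  obtain grad where upper: "\<forall>p1 p2. l p2 \<le> l p1 + grad p1 \<bullet> (p2 - p1) + L / 2 * (norm (p2 - p1))\<^sup>2"
    using assms(1) unfolding F1L_def by blast
  have "grad z = 0"
    using upper min \<open>L \<ge> 0\<close> by (intro upper_quadratic_grad_eq_0_at_min[of l z _ L]) auto
  with upper[THEN spec[of _ z], THEN spec[of _ p]] show ?thesis by simp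
qed

lemma upper_quadratic_grad_norm_bound:
  fixes g p :: "'a::real_inner"
  assumes upper: "\<And>q. f q \<le> f p + g \<bullet> (q - p) + L / 2 * (norm (q - p))\<^sup>2"
    and min: "\<And>q. f pu \<le> f q" and "L > 0"
  shows "(norm g)\<^sup>2 \<le> 2 * L * (f p - f pu)"
proof -
  define t where "t = 1 / L"
  have "t > 0" using \<open>L > 0\<close> by (simp add: t_def)
  have "f pu \<le> f (p - t *\<^sub>R g)" by (rule min)
  also have "\<dots> \<le> f p - t * (norm g)\<^sup>2 + L / 2 * t\<^sup>2 * (norm g)\<^sup>2"
    using upper[of "p - t *\<^sub>R g"] \<open>t > 0\<close>
    by (simp add: power2_norm_eq_inner inner_diff_right power_mult_distrib)
  also have "\<dots> = f p - (norm g)\<^sup>2 / (2 * L)"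
    using \<open>L > 0\<close> by (simp add: t_def power2_eq_square field_simps)
  finally show ?thesis using \<open>L > 0\<close> by (simp add: field_simps)
qed

lemma F1L_upper_bound_by_gap:
  fixes f :: "'a::real_inner \<Rightarrow> real"
  assumes "F1L f L" "L > 0" and min: "\<And>q. f pu \<le> f q"
  shows "f q \<le> f p + sqrt (2 * L * (f p - f pu)) * norm (q - p) + L / 2 * (norm (q - p))\<^sup>2"
proof -
  obtain grad where upper: "\<forall>p1 p2. f p2 \<le> f p1 + grad p1 \<bullet> (p2 - p1) + L / 2 * (norm (p2 - p1))\<^sup>2"
    using assms(1) unfolding F1L_def by blast
  have "norm (grad p) \<le> sqrt (2 * L * (f p - f pu))"
    using upper min \<open>L > 0\<close> by (intro real_le_rsqrt upper_quadratic_grad_norm_bound) auto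
  then have "grad p \<bullet> (q - p) \<le> sqrt (2 * L * (f p - f pu)) * norm (q - p)"
    by (meson norm_cauchy_schwarz mult_right_mono norm_ge_zero order_trans)
  with upper[THEN spec[of _ p], THEN spec[of _ q]] show ?thesis by linarith
qed

lemma strongly_convex_le_F1L:
  fixes f :: "'a::euclidean_space \<Rightarrow> real"
  assumes "F1L f L" "strongly_convex f \<mu>"
  shows "\<mu> \<le> L"
proof -
  obtain g1 where upper: "\<forall>p1 p2. f p2 \<le> f p1 + g1 p1 \<bullet> (p2 - p1) + L / 2 * (norm (p2 - p1))\<^sup>2"
    using assms(1) unfolding F1L_def by blast
  obtain g2 where lower: "\<forall>p1 p2. f p2 \<ge> f p1 + g2 p1 \<bullet> (p2 - p1) + \<mu> / 2 * (norm (p2 - p1))\<^sup>2"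
    using assms(2) unfolding strongly_convex_def by blast
  have upper0: "f x \<le> f 0 + g1 0 \<bullet> x + L / 2 * (norm x)\<^sup>2" for x
    using upper[THEN spec[of _ 0]] by simp
  have lower0: "f 0 + g2 0 \<bullet> x + \<mu> / 2 * (norm x)\<^sup>2 \<le> f x" for x
    using lower[THEN spec[of _ 0]] by simp
  obtain b :: 'a where "b \<in> Basis" using nonempty_Basis by blast
  then have "norm b = 1" by simp
  have "g2 0 \<bullet> b + \<mu> / 2 \<le> g1 0 \<bullet> b + L / 2"
    using upper0[of b] lower0[of b] \<open>norm b = 1\<close> by simp
  moreover have "- (g2 0 \<bullet> b) + \<mu> / 2 \<le> - (g1 0 \<bullet> b) + L / 2"
    using upper0[of "-b"] lower0[of "-b"] \<open>norm b = 1\<close> by simp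
  ultimately show ?thesis by linarith
qed

lemma quadratic_le_linear_bound:
  fixes a b d G :: real
  assumes "a * d\<^sup>2 \<le> G * d + b / 2 * d\<^sup>2" "b \<le> a" "a > 0" "d \<ge> 0" "G \<ge> 0"
  shows "d \<le> 2 * G / a"
proof (cases "d = 0")
  case True
  with assms show ?thesis by simp
next
  case False
  have "a / 2 * d\<^sup>2 \<le> (a - b / 2) * d\<^sup>2"
    using \<open>b \<le> a\<close> by (intro mult_right_mono) auto
  also have "\<dots> \<le> G * d" using assms(1) by (simp add: algebra_simps)
  finally have "(a / 2 * d) * d \<le> G * d" by (simp add: power2_eq_square)
  with False \<open>d \<ge> 0\<close> have "a / 2 * d \<le> G" by simp
  with \<open>a > 0\<close> show ?thesis by (simp add: field_simps)
qed

lemma penalized_minimizer_near_zero: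
  fixes f \<psi> :: "'a::real_inner \<Rightarrow> real"
  assumes "F1L f L" "0 < \<mu>" "\<mu> \<le> L" "\<beta> > 0" "\<rho> > 0" "\<rho> > L / \<beta>"
    and psi_nonneg: "\<And>p. 0 \<le> \<psi> p" and "\<psi> z = 0"
    and growth: "\<beta> * (norm (z - pstar))\<^sup>2 \<le> \<psi> pstar"
    and pstar_min: "\<And>p. f pstar + \<rho> * \<psi> pstar \<le> f p + \<rho> * \<psi> p"
    and pu_min: "\<And>p. f pu \<le> f p"
  shows "norm (z - pstar) \<le> 2 * L / \<beta> * sqrt (2 / \<mu> * \<psi> pu) / sqrt \<rho>"
proof -
  define d where "d = norm (z - pstar)"
  define G where "G = sqrt (2 * L * (f pstar - f pu))"
  have "L > 0" "L \<le> \<rho> * \<beta>"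
    using assms(2-6) by (auto simp: pos_divide_less_eq)
  have "\<rho> * \<beta> * d\<^sup>2 \<le> \<rho> * \<psi> pstar"
    using growth \<open>\<rho> > 0\<close> by (simp add: d_def)
  also have "\<dots> \<le> f z - f pstar"
    using pstar_min[of z] \<open>\<psi> z = 0\<close> by simp
  also have "\<dots> \<le> G * d + L / 2 * d\<^sup>2"
    using F1L_upper_bound_by_gap[OF \<open>F1L f L\<close> \<open>L > 0\<close> pu_min, of z pstar]
    by (simp add: G_def d_def)
  finally have d_le: "d \<le> 2 * G / (\<rho> * \<beta>)"
    using \<open>L \<le> \<rho> * \<beta>\<close> \<open>L > 0\<close> pu_min[of pstar] assms(4,5)
    by (intro quadratic_le_linear_bound[of _ _ _ L]) (auto simp: d_def G_def)
  have "0 \<le> \<rho> * \<psi> pstar" using psi_nonneg[of pstar] \<open>\<rho> > 0\<close> by simp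
  with pstar_min[of pu] have "f pstar - f pu \<le> \<rho> * \<psi> pu" by linarith
  with \<open>L > 0\<close> have "G \<le> sqrt (2 * L * (\<rho> * \<psi> pu))"
    unfolding G_def by (intro real_sqrt_le_mono) simp
  also have "\<dots> = sqrt \<rho> * sqrt (2 * L * \<psi> pu)"
    by (simp add: ac_simps flip: real_sqrt_mult)
  also have "\<dots> \<le> sqrt \<rho> * (L * sqrt (2 / \<mu> * \<psi> pu))"
  proof (intro mult_left_mono)
    have "2 * L * \<psi> pu \<le> L\<^sup>2 * (2 / \<mu> * \<psi> pu)"
      using \<open>0 < \<mu>\<close> \<open>\<mu> \<le> L\<close> psi_nonneg[of pu]
      by (simp add: field_simps power2_eq_square mult_right_mono)
    then show "sqrt (2 * L * \<psi> pu) \<le> L * sqrt (2 / \<mu> * \<psi> pu)"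
      using \<open>L > 0\<close> by (metis abs_of_pos real_sqrt_abs real_sqrt_le_mono real_sqrt_mult)
  qed (use \<open>\<rho> > 0\<close> in simp)
  finally have G_le: "G \<le> sqrt \<rho> * (L * sqrt (2 / \<mu> * \<psi> pu))" .
  note d_le
  also have "2 * G / (\<rho> * \<beta>) \<le> 2 * (sqrt \<rho> * (L * sqrt (2 / \<mu> * \<psi> pu))) / (\<rho> * \<beta>)"
    using G_le assms(4,5) by (intro divide_right_mono) auto
  also have "\<dots> = 2 * L / \<beta> * sqrt (2 / \<mu> * \<psi> pu) / sqrt \<rho>"
    using \<open>\<rho> > 0\<close> by (simp add: divide_simps)
  finally show ?thesis unfolding d_def .
qed

lemma F1L_nonneg_le_near_zero:
  fixes \<psi> :: "'a::real_inner \<Rightarrow> real"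
  assumes "F1L \<psi> L" "L \<ge> 0" "\<And>p. 0 \<le> \<psi> p" "\<psi> z = 0" "norm (z - q) \<le> K"
  shows "\<psi> p \<le> L / 2 * (norm (p - q) + K)\<^sup>2"
proof -
  have "\<psi> p \<le> L / 2 * (norm (p - z))\<^sup>2"
    using F1L_le_min_plus_quadratic[OF assms(1,2), of z p] assms(3,4) by simp
  also have "\<dots> \<le> L / 2 * (norm (p - q) + K)\<^sup>2"
  proof (intro mult_left_mono power_mono)
    show "norm (p - z) \<le> norm (p - q) + K"
      using norm_triangle_ineq[of "p - q" "q - z"] assms(5) by (simp add: norm_minus_commute)
  qed (use assms(2) in auto)
  finally show ?thesis .
qed

theorem lemma2:
  fixes f0 :: "real^'n \<Rightarrow> real"
    and c :: "nat \<Rightarrow> real^'n \<Rightarrow> real"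
    and nc :: nat and Is Ih :: "nat set"
    and eps \<rho> L0 Lpsi \<mu>0 \<beta> :: real
    and pstar pu :: "real^'n"
  defines "\<psi> \<equiv> penalty Is Ih c eps"
  defines "\<A> \<equiv> {p. \<psi> p = 0}"
  assumes nc: "nc \<ge> 1"
    and partition: "Is \<union> Ih = {1..nc}" "Is \<inter> Ih = {}"
    and f0_C1: "C1 f0"
    and c_C1: "\<forall>i\<in>{1..nc}. C1 (c i)"
    and opt_exists: "\<exists>popt. (\<forall>i\<in>{1..nc}. c i popt \<le> 0) \<and>
                       (\<forall>p. (\<forall>i\<in>{1..nc}. c i p \<le> 0) \<longrightarrow> f0 popt \<le> f0 p)"
    and eps_pos: "eps > 0"
    and rho_pos: "\<rho> > 0"
    and A1: "\<forall>p. f0 p \<ge> 0"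
    and A2: "L0 \<ge> 0" "Lpsi \<ge> 0" "F1L f0 L0" "F1L \<psi> Lpsi"
    and A3: "\<mu>0 > 0" "strongly_convex f0 \<mu>0" "convex_on UNIV \<psi>"
    and A4: "\<A> \<noteq> {}" "\<beta> > 0" "\<forall>p. \<psi> p \<ge> \<beta> * (infdist p \<A>)\<^sup>2"
    and pstar_min: "\<forall>p. f0 pstar + \<rho> * \<psi> pstar \<le> f0 p + \<rho> * \<psi> p"
    and pu_min: "\<forall>p. f0 pu \<le> f0 p"
    and rho_large: "\<rho> > L0 / \<beta>"
  shows "(\<forall>p. \<psi> p \<le> Lpsi / 2 *
            (norm (p - pstar) + (2 * L0 / \<beta> * sqrt (2 / \<mu>0 * \<psi> pu)) / sqrt \<rho>)\<^sup>2)
       \<and> \<psi> pstar \<le> Lpsi * (2 * L0 / \<beta> * sqrt (2 / \<mu>0 * \<psi> pu))\<^sup>2 / (2 * \<rho>)"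
proof -
  define K where "K = 2 * L0 / \<beta> * sqrt (2 / \<mu>0 * \<psi> pu) / sqrt \<rho>"
  have psi_nonneg: "0 \<le> \<psi> p" for p
    unfolding \<psi>_def penalty_def by (intro add_nonneg_nonneg sum_nonneg) auto
  have "closed \<A>"
    unfolding \<A>_def using F1L_continuous[OF A2(4)] by (simp add: closed_Collect_eq)
  then obtain z where "z \<in> \<A>" and z_nearest: "infdist pstar \<A> = dist pstar z"
    using infdist_attains_inf A4(1) by blast
  then have "\<psi> z = 0" by (simp add: \<A>_def)
  have "\<mu>0 \<le> L0" using strongly_convex_le_F1L[OF A2(3) A3(2)] .
  moreover have "\<beta> * (norm (z - pstar))\<^sup>2 \<le> \<psi> pstar"
    using A4(3)[rule_format, of pstar] z_nearest by (simp add: dist_norm norm_minus_commute)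
  ultimately have "norm (z - pstar) \<le> K"
    unfolding K_def using A2(3) A3(1) A4(2) rho_pos rho_large psi_nonneg \<open>\<psi> z = 0\<close> pstar_min pu_min
    by (intro penalized_minimizer_near_zero[where \<psi> = \<psi>]) auto
  then have psi_bound: "\<psi> p \<le> Lpsi / 2 * (norm (p - pstar) + K)\<^sup>2" for p
    using A2(2,4) psi_nonneg \<open>\<psi> z = 0\<close> by (intro F1L_nonneg_le_near_zero[where \<psi> = \<psi>])
  moreover have "Lpsi / 2 * K\<^sup>2 = Lpsi * (2 * L0 / \<beta> * sqrt (2 / \<mu>0 * \<psi> pu))\<^sup>2 / (2 * \<rho>)"
    using rho_pos by (simp add: K_def power_divide power_mult_distrib)
  ultimately show ?thesis
    using psi_bound[of pstar] by (simp add: K_def)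
qed

end
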